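(* Let $\alpha$ be a nonzero real number. A regular curve in $\mathbb S^2$ with constant curvature, not passing through $N$, is an $\alpha$-stationary curve if and only if one of the following holds: (1) it is contained in a geodesic (great circle) passing through $N$ (this case occurs for every value of $\alpha$); (2) it is contained in a circle of radius $r\in(0,\pi)$ centered at $N$ and $\alpha=-r\cot(r)$.
   Context: $\mathbb S^2\subset\mathbb R^3$ is the unit sphere with the Euclidean inner product. It is parametrized by $\Psi(u,v)=(\sin u\cos v,\sin u\sin v,\cos u)$, and $N=(0,0,1)$. The spherical distance from $\Psi(u,v)$ to $N$ is $u\in[0,\pi]$. The circle of radius $r$ centered at $N$ is $\{\Psi(r,v)\}$. For a regular curve $\gamma(t)=\Psi(u(t),v(t))$, the unit normal is $\mathbf n=(\gamma'\times\gamma)/|\gamma'|$ and the curvature is $\kappa=\langle\gamma'',\mathbf n\rangle/|\gamma'|^2$. The energy is $$E_\alpha[\gamma]=\int_\gamma \mathsf d^\alpha ds=\int u^\alpha\sqrt{u'^2+\sin^2(u)v'^2}\,dt,$$ where $\mathsf d$ is the distance to $N$. An $\alpha$-stationary curve is a critical point of $E_\alpha$, i.e. $(u,v)$ satisfies its Euler–Lagrange equations. Throughout the paper, $\alpha\ne0$ and curves avoid $N$. *)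

theory Defs
  imports "HOL-Analysis.Analysis" "HOL-Analysis.Cross3"
begin

definition Psi :: "real \<Rightarrow> real \<Rightarrow> real^3" where
  "Psi u v = vector [sin u * cos v, sin u * sin v, cos u]"

definition NP :: "real^3" where
  "NP = vector [0, 0, 1]"

definition curve :: "(real \<Rightarrow> real) \<Rightarrow> (real \<Rightarrow> real) \<Rightarrow> real \<Rightarrow> real^3" where
  "curve u v t = Psi (u t) (v t)"

text \<open>Regular C^2-type curve on an open interval I, avoiding N, with u the
  spherical distance to N (so u in (0, pi]).\<close>
definition regular_curve :: "(real \<Rightarrow> real) \<Rightarrow> (real \<Rightarrow> real) \<Rightarrow> real set \<Rightarrow> bool" where
  "regular_curve u v I \<longleftrightarrow>
     (\<forall>t\<in>I. u differentiable (at t) \<and> v differentiable (at t)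
        \<and> deriv u differentiable (at t) \<and> deriv v differentiable (at t)
        \<and> 0 < u t \<and> u t \<le> pi
        \<and> vector_derivative (curve u v) (at t) \<noteq> 0)"

definition unit_normal :: "(real \<Rightarrow> real^3) \<Rightarrow> real \<Rightarrow> real^3" where
  "unit_normal g t = (1 / norm (vector_derivative g (at t))) *\<^sub>R
      cross3 (vector_derivative g (at t)) (g t)"

definition curvature :: "(real \<Rightarrow> real^3) \<Rightarrow> real \<Rightarrow> real" where
  "curvature g t =
     (vector_derivative (\<lambda>s. vector_derivative g (at s)) (at t) \<bullet> unit_normal g t)
       / (norm (vector_derivative g (at t)))\<^sup>2"

definition constant_curvature :: "(real \<Rightarrow> real^3) \<Rightarrow> real set \<Rightarrow> bool" where
  "constant_curvature g I \<longleftrightarrow> (\<exists>c. \<forall>t\<in>I. curvature g t = c)"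

definition speed :: "(real \<Rightarrow> real) \<Rightarrow> (real \<Rightarrow> real) \<Rightarrow> real \<Rightarrow> real" where
  "speed u v t = sqrt ((deriv u t)\<^sup>2 + (sin (u t))\<^sup>2 * (deriv v t)\<^sup>2)"

text \<open>Euler--Lagrange equations of L = u^alpha sqrt(u'^2 + sin^2(u) v'^2):
  d/dt (dL/du') = dL/du and d/dt (dL/dv') = dL/dv = 0.\<close>
definition alpha_stationary :: "real \<Rightarrow> (real \<Rightarrow> real) \<Rightarrow> (real \<Rightarrow> real) \<Rightarrow> real set \<Rightarrow> bool" where
  "alpha_stationary \<alpha> u v I \<longleftrightarrow>
     (\<forall>t\<in>I.
        ((\<lambda>s. u s powr \<alpha> * deriv u s / speed u v s) has_real_derivative
           (\<alpha> * u t powr (\<alpha> - 1) * speed u v t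
            + u t powr \<alpha> * sin (u t) * cos (u t) * (deriv v t)\<^sup>2 / speed u v t)) (at t)
      \<and> ((\<lambda>s. u s powr \<alpha> * (sin (u s))\<^sup>2 * deriv v s / speed u v s) has_real_derivative 0) (at t))"

definition great_circle :: "real^3 \<Rightarrow> (real^3) set" where
  "great_circle w = {x. norm x = 1 \<and> x \<bullet> w = 0}"

definition circle_N :: "real \<Rightarrow> (real^3) set" where
  "circle_N r = {Psi r v | v. True}"

end

(*
  The curve is a critical point of a functional invariant under rotations about N, so the
  second Euler-Lagrange equation says that the angular momentum
  Q = u^alpha sin^2 u v' / |gamma'| is constant.  If Q = 0 then v is constant: the curve runs
  along a meridian, and the first equation then holds for every alpha.  If Q <> 0, the first
  equation can be rewritten through the curvature as u^(alpha+1) sin u * kappa = alpha Q.  For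
  constant kappa this makes u^(alpha+1) sin u constant along the curve; this function of u is
  not constant on any subinterval of (0, pi), so u is a constant r, and on that parallel the
  first equation reduces to alpha sin r + r cos r = 0.
*)
theory Submission
  imports Defs
begin

section \<open>Real functions of one variable\<close>

lemma derivative_eq_0_if_locally_constant:
  fixes f :: "real \<Rightarrow> real"
  assumes "(f has_real_derivative D) (at y)" "open S" "y \<in> S" "\<And>z. z \<in> S \<Longrightarrow> f z = c"
  shows "D = 0"
proof -
  have "((\<lambda>z. c) has_real_derivative D) (at y)"
    using has_field_derivative_transform_within_open[OF assms(1-3)] assms(4) by simp
  then show ?thesis using DERIV_const DERIV_unique by blast
qed

lemma sgn_eq_if_continuous_nonvanishing:
  fixes f :: "real \<Rightarrow> real"
  assumes "connected I" "continuous_on I f" "0 \<notin> f ` I" "s \<in> I" "t \<in> I"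
  shows "sgn (f s) = sgn (f t)"
proof -
  have "connected (f ` I)" using assms(2,1) by (rule connected_continuous_image)
  have no_sign_change: "\<not> (f x < 0 \<and> 0 < f y)" if "x \<in> I" "y \<in> I" for x y
  proof
    assume "f x < 0 \<and> 0 < f y"
    then have "0 \<in> {f x..f y}" by simp
    moreover have "{f x..f y} \<subseteq> f ` I"
      using connected_contains_Icc[OF \<open>connected (f ` I)\<close>] that by blast
    ultimately show False using assms(3) by blast
  qed
  show ?thesis
    using no_sign_change[OF assms(4,5)] no_sign_change[OF assms(5,4)] assms(3-5)
    by (auto simp: sgn_if)
qed

lemma vector3_has_vector_derivative:
  assumes "(f has_real_derivative f') (at t)" "(g has_real_derivative g') (at t)"
    "(h has_real_derivative h') (at t)"
  shows "((\<lambda>s. vector [f s, g s, h s] :: real^3) has_vector_derivative vector [f', g', h']) (at t)"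
proof -
  have axes: "(vector [x, y, z] :: real^3) = x *\<^sub>R axis 1 1 + y *\<^sub>R axis 2 1 + z *\<^sub>R axis 3 1"
    for x y z
    by (simp add: vec_eq_iff forall_3 vector_3 axis_def)
  have scaled: "((\<lambda>s. f s *\<^sub>R (c::real^3)) has_vector_derivative f' *\<^sub>R c) (at t)"
    if "(f has_real_derivative f') (at t)" for f f' c
    using has_vector_derivative_scaleR[OF that has_vector_derivative_const] by simp
  show ?thesis
    unfolding axes by (intro has_vector_derivative_add scaled assms)
qed

lemma powr_mult_sin_not_constant:
  fixes \<alpha> K p q :: real
  assumes "0 \<le> p" "p < q" "q \<le> pi"
  shows "\<exists>y\<in>{p<..<q}. y powr (\<alpha> + 1) * sin y \<noteq> K"
proof (rule ccontr)
  assume "\<not> ?thesis"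
  then have const: "y powr (\<alpha> + 1) * sin y = K" if "y \<in> {p<..<q}" for y
    using that by blast
  have first: "(\<alpha> + 1) * sin y + y * cos y = 0" if y: "y \<in> {p<..<q}" for y
  proof -
    have "y > 0" using y assms by auto
    have "((\<lambda>y. y powr (\<alpha> + 1) * sin y) has_real_derivative
        y powr \<alpha> * ((\<alpha> + 1) * sin y + y * cos y)) (at y)"
      by (rule DERIV_cong[OF DERIV_mult[OF DERIV_fun_powr[OF DERIV_ident \<open>y > 0\<close>] DERIV_sin]])
        (use \<open>y > 0\<close> in \<open>simp add: powr_add algebra_simps\<close>)
    then have "y powr \<alpha> * ((\<alpha> + 1) * sin y + y * cos y) = 0"
      by (rule derivative_eq_0_if_locally_constant[OF _ _ y const]) simp
    then show ?thesis using \<open>y > 0\<close> by simp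
  qed
  have second: "(\<alpha> + 2) * cos y - y * sin y = 0" if y: "y \<in> {p<..<q}" for y
  proof -
    have "((\<lambda>y. (\<alpha> + 1) * sin y + y * cos y) has_real_derivative (\<alpha> + 2) * cos y - y * sin y) (at y)"
      by (rule derivative_eq_intros refl)+ (simp add: algebra_simps)
    then show ?thesis by (rule derivative_eq_0_if_locally_constant[OF _ _ y first]) simp
  qed
  have third: "(\<alpha> + 3) * sin y + y * cos y = 0" if y: "y \<in> {p<..<q}" for y
  proof -
    have "((\<lambda>y. (\<alpha> + 2) * cos y - y * sin y) has_real_derivative - ((\<alpha> + 3) * sin y + y * cos y)) (at y)"
      by (rule derivative_eq_intros refl)+ (simp add: algebra_simps)
    then have "- ((\<alpha> + 3) * sin y + y * cos y) = 0"
      by (rule derivative_eq_0_if_locally_constant[OF _ _ y second]) simp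
    then show ?thesis by simp
  qed
  define y where "y = (p + q) / 2"
  have y: "y \<in> {p<..<q}" using assms by (auto simp: y_def)
  then have "sin y > 0" using assms by (intro sin_gt_zero) auto
  moreover have "sin y = 0" using first[OF y] third[OF y] by (simp add: algebra_simps)
  ultimately show False by simp
qed

lemma constant_if_powr_mult_sin_constant:
  fixes u :: "real \<Rightarrow> real"
  assumes "connected I" "continuous_on I u" "\<And>t. t \<in> I \<Longrightarrow> 0 < u t \<and> u t \<le> pi"
    "\<And>t. t \<in> I \<Longrightarrow> u t powr (\<alpha> + 1) * sin (u t) = K" "s \<in> I" "t \<in> I"
  shows "u s = u t"
proof -
  have "connected (u ` I)" using assms(2,1) by (rule connected_continuous_image)
  have "\<not> u x < u y" if "x \<in> I" "y \<in> I" for x y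
  proof
    assume "u x < u y"
    moreover have "0 \<le> u x" "u y \<le> pi" using assms(3) that by (auto simp: less_imp_le)
    ultimately obtain z where z: "z \<in> {u x<..<u y}" "z powr (\<alpha> + 1) * sin z \<noteq> K"
      using powr_mult_sin_not_constant[of "u x" "u y" \<alpha> K] by blast
    moreover have "{u x..u y} \<subseteq> u ` I"
      using connected_contains_Icc[OF \<open>connected (u ` I)\<close>] that by blast
    ultimately have "z \<in> u ` I" by auto
    then show False using assms(4) z(2) by auto
  qed
  then show ?thesis using assms(5,6) by (meson linorder_neqE)
qed

section \<open>Curves in geographic coordinates\<close>

lemma norm_Psi [simp]: "norm (Psi x y) = 1"
proof -
  have "Psi x y \<bullet> Psi x y = (sin x * cos y)\<^sup>2 + (sin x * sin y)\<^sup>2 + (cos x)\<^sup>2"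
    by (simp add: Psi_def inner_vec_def sum_3 power2_eq_square)
  also have "\<dots> = 1" using sin_cos_squared_add[of x] sin_cos_squared_add[of y] by algebra
  finally show ?thesis by (simp add: norm_eq_sqrt_inner)
qed

definition curve_velocity :: "(real \<Rightarrow> real) \<Rightarrow> (real \<Rightarrow> real) \<Rightarrow> real \<Rightarrow> real^3" where
  "curve_velocity u v t =
     vector [deriv u t * cos (u t) * cos (v t) - deriv v t * sin (u t) * sin (v t),
             deriv u t * cos (u t) * sin (v t) + deriv v t * sin (u t) * cos (v t),
             - deriv u t * sin (u t)]"

definition curve_acceleration :: "(real \<Rightarrow> real) \<Rightarrow> (real \<Rightarrow> real) \<Rightarrow> real \<Rightarrow> real^3" where
  "curve_acceleration u v t =
     (let a = deriv u t; b = deriv v t; a' = deriv (deriv u) t; b' = deriv (deriv v) t;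
          cu = cos (u t); su = sin (u t); cv = cos (v t); sv = sin (v t)
      in vector [a' * cu * cv - a * a * su * cv - 2 * a * b * cu * sv - b' * su * sv - b * b * su * cv,
                 a' * cu * sv - a * a * su * sv + 2 * a * b * cu * cv + b' * su * cv - b * b * su * sv,
                 - a' * su - a * a * cu])"

definition curvature_numerator :: "(real \<Rightarrow> real) \<Rightarrow> (real \<Rightarrow> real) \<Rightarrow> real \<Rightarrow> real" where
  "curvature_numerator u v t =
     (let a = deriv u t; b = deriv v t; a' = deriv (deriv u) t; b' = deriv (deriv v) t;
          cu = cos (u t); su = sin (u t)
      in su * b * a' - su * su * cu * b ^ 3 - 2 * a * a * b * cu - su * a * b')"

lemma curve_has_vector_derivative:
  assumes "(u has_real_derivative deriv u t) (at t)" "(v has_real_derivative deriv v t) (at t)"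
  shows "(curve u v has_vector_derivative curve_velocity u v t) (at t)"
proof -
  have "curve u v = (\<lambda>s. vector [sin (u s) * cos (v s), sin (u s) * sin (v s), cos (u s)])"
    by (auto simp: curve_def Psi_def)
  moreover have "((\<lambda>s. sin (u s) * cos (v s)) has_real_derivative
      deriv u t * cos (u t) * cos (v t) - deriv v t * sin (u t) * sin (v t)) (at t)"
    by (rule derivative_eq_intros assms refl)+ (simp add: algebra_simps)
  moreover have "((\<lambda>s. sin (u s) * sin (v s)) has_real_derivative
      deriv u t * cos (u t) * sin (v t) + deriv v t * sin (u t) * cos (v t)) (at t)"
    by (rule derivative_eq_intros assms refl)+ (simp add: algebra_simps)
  moreover have "((\<lambda>s. cos (u s)) has_real_derivative - deriv u t * sin (u t)) (at t)"
    by (rule derivative_eq_intros assms refl)+ (simp add: algebra_simps)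
  ultimately show ?thesis
    unfolding curve_velocity_def by (simp add: vector3_has_vector_derivative)
qed

lemma curve_velocity_has_vector_derivative:
  assumes "(u has_real_derivative deriv u t) (at t)" "(v has_real_derivative deriv v t) (at t)"
    "(deriv u has_real_derivative deriv (deriv u) t) (at t)"
    "(deriv v has_real_derivative deriv (deriv v) t) (at t)"
  shows "(curve_velocity u v has_vector_derivative curve_acceleration u v t) (at t)"
  unfolding curve_velocity_def[abs_def] curve_acceleration_def Let_def
  by (rule vector3_has_vector_derivative; (rule derivative_eq_intros assms refl)+; simp add: algebra_simps)

lemma inner_curve_velocity:
  "curve_velocity u v t \<bullet> curve_velocity u v t = (deriv u t)\<^sup>2 + (sin (u t))\<^sup>2 * (deriv v t)\<^sup>2"
proof -
  have "cos (u t)^2 + sin (u t)^2 = 1" "cos (v t)^2 + sin (v t)^2 = 1" by simp_all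
  then show ?thesis
    unfolding curve_velocity_def inner_vec_def sum_3 vector_3 inner_real_def by algebra
qed

lemma curve_acceleration_inner_cross3:
  "curve_acceleration u v t \<bullet> cross3 (curve_velocity u v t) (curve u v t) = curvature_numerator u v t"
proof -
  have "cos (u t)^2 + sin (u t)^2 = 1" "cos (v t)^2 + sin (v t)^2 = 1" by simp_all
  then show ?thesis
    unfolding curve_acceleration_def curve_velocity_def curvature_numerator_def Let_def curve_def
      Psi_def cross3_def inner_vec_def sum_3 vector_3 inner_real_def
    by algebra
qed

lemma regular_curve_has_derivatives:
  assumes "regular_curve u v I" "t \<in> I"
  shows "(u has_real_derivative deriv u t) (at t)" "(v has_real_derivative deriv v t) (at t)"
    "(deriv u has_real_derivative deriv (deriv u) t) (at t)"
    "(deriv v has_real_derivative deriv (deriv v) t) (at t)"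
  using assms unfolding regular_curve_def by (simp_all add: DERIV_deriv_iff_real_differentiable)

lemma regular_curve_continuous_on:
  assumes "regular_curve u v I"
  shows "continuous_on I u" "continuous_on I (deriv u)" "continuous_on I (deriv v)"
  using regular_curve_has_derivatives[OF assms]
  by (auto intro!: continuous_at_imp_continuous_on DERIV_isCont)

lemma vector_derivative_curve:
  assumes "regular_curve u v I" "t \<in> I"
  shows "vector_derivative (curve u v) (at t) = curve_velocity u v t"
  using assms by (intro vector_derivative_at curve_has_vector_derivative regular_curve_has_derivatives)

lemma speed_eq_norm_curve_velocity: "speed u v t = norm (curve_velocity u v t)"
  by (simp add: speed_def norm_eq_sqrt_inner inner_curve_velocity)

lemma regular_curve_speed_pos:
  assumes "regular_curve u v I" "t \<in> I"
  shows "speed u v t > 0"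
proof -
  have "curve_velocity u v t \<noteq> 0"
    using assms vector_derivative_curve[OF assms] unfolding regular_curve_def by auto
  then show ?thesis by (simp add: speed_eq_norm_curve_velocity)
qed

lemma curvature_curve:
  assumes "regular_curve u v I" "open I" "t \<in> I"
  shows "curvature (curve u v) t = curvature_numerator u v t / speed u v t ^ 3"
proof -
  have "((\<lambda>s. vector_derivative (curve u v) (at s)) has_vector_derivative curve_acceleration u v t) (at t)"
  proof (rule has_vector_derivative_transform_within_open[OF _ \<open>open I\<close> \<open>t \<in> I\<close>])
    show "(curve_velocity u v has_vector_derivative curve_acceleration u v t) (at t)"
      using assms by (intro curve_velocity_has_vector_derivative regular_curve_has_derivatives)
  qed (use vector_derivative_curve[OF assms(1)] in simp)
  then have "vector_derivative (\<lambda>s. vector_derivative (curve u v) (at s)) (at t) = curve_acceleration u v t"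
    by (rule vector_derivative_at)
  then show ?thesis
    using regular_curve_speed_pos[OF assms(1,3)]
    unfolding curvature_def unit_normal_def vector_derivative_curve[OF assms(1,3)]
      speed_eq_norm_curve_velocity inner_scaleR_right
    by (simp add: curve_acceleration_inner_cross3 power2_eq_square power3_eq_cube)
qed

lemma regular_curve_u_less_pi:
  assumes "regular_curve u v I" "open I" "t \<in> I"
  shows "u t < pi"
proof (rule ccontr)
  assume "\<not> u t < pi"
  then have "u t = pi" using assms unfolding regular_curve_def by force
  obtain d where "d > 0" "ball t d \<subseteq> I" using assms(2,3) open_contains_ball by blast
  have "deriv u t = 0"
  proof (rule DERIV_local_max[OF regular_curve_has_derivatives(1)[OF assms(1,3)] \<open>d > 0\<close>])
    show "\<forall>y. \<bar>t - y\<bar> < d \<longrightarrow> u y \<le> u t"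
      using assms(1) \<open>u t = pi\<close> \<open>ball t d \<subseteq> I\<close> unfolding regular_curve_def
      by (force simp: dist_real_def)
  qed
  then have "speed u v t = 0" by (simp add: speed_def \<open>u t = pi\<close>)
  then show False using regular_curve_speed_pos[OF assms(1,3)] by simp
qed

lemma regular_curve_sin_pos:
  assumes "regular_curve u v I" "open I" "t \<in> I"
  shows "sin (u t) > 0"
  using assms regular_curve_u_less_pi[OF assms] by (intro sin_gt_zero) (auto simp: regular_curve_def)

lemma speed_has_real_derivative:
  assumes "regular_curve u v I" "t \<in> I"
  shows "(speed u v has_real_derivative
     (deriv u t * deriv (deriv u) t + sin (u t) * cos (u t) * deriv u t * (deriv v t)\<^sup>2
      + (sin (u t))\<^sup>2 * deriv v t * deriv (deriv v) t) / speed u v t) (at t)"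
proof -
  note derivs = regular_curve_has_derivatives[OF assms]
  have pos: "speed u v t > 0" by (rule regular_curve_speed_pos[OF assms])
  then have "(deriv u t)\<^sup>2 + (sin (u t))\<^sup>2 * (deriv v t)\<^sup>2 > 0" by (simp add: speed_def)
  moreover have "((\<lambda>s. (deriv u s)\<^sup>2 + (sin (u s))\<^sup>2 * (deriv v s)\<^sup>2) has_real_derivative
    2 * (deriv u t * deriv (deriv u) t + sin (u t) * cos (u t) * deriv u t * (deriv v t)\<^sup>2
      + (sin (u t))\<^sup>2 * deriv v t * deriv (deriv v) t)) (at t)"
    by (rule derivative_eq_intros derivs refl)+ (simp add: algebra_simps power2_eq_square)
  ultimately show ?thesis
    unfolding speed_def[abs_def]
    by (rule DERIV_cong[OF DERIV_chain2[OF DERIV_real_sqrt]]) (use pos in \<open>simp add: speed_def field_simps\<close>)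
qed

lemma regular_curve_on_parallel:
  assumes "regular_curve u v I" "open I" "\<forall>s\<in>I. u s = r" "t \<in> I"
  shows "deriv u t = 0" "sin r > 0" "speed u v t = sin r * \<bar>deriv v t\<bar>" "deriv v t \<noteq> 0"
proof -
  show u'_0: "deriv u t = 0"
    using derivative_eq_0_if_locally_constant[OF regular_curve_has_derivatives(1)[OF assms(1,4)]
        assms(2,4)] assms(3) by blast
  show "sin r > 0" using regular_curve_sin_pos[OF assms(1,2,4)] assms(3,4) by simp
  then show speed: "speed u v t = sin r * \<bar>deriv v t\<bar>"
    by (simp add: speed_def u'_0 assms(3,4) power_mult_distrib real_sqrt_mult)
  show "deriv v t \<noteq> 0" using regular_curve_speed_pos[OF assms(1,4)] speed by auto
qed

section \<open>The Euler--Lagrange equations\<close>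

text \<open>The quotient-rule form of the first Euler-Lagrange equation, in the abbreviations
  \<open>x = u\<close>, \<open>p = u powr \<alpha>\<close>, \<open>q = u powr (\<alpha> - 1)\<close>, \<open>S = |\<gamma>'|\<close>, \<open>a = u'\<close>,
  \<open>b = v'\<close>, \<open>s = sin u\<close>, \<open>c = cos u\<close>.\<close>

lemma euler_lagrange_algebra:
  fixes \<alpha> x p q S a a' b b' s c :: real
  assumes "q = p / x" "p > 0" "S\<^sup>2 = a\<^sup>2 + s\<^sup>2 * b\<^sup>2"
    and eq: "((\<alpha> * q * a * a + p * a') * S - p * a * ((a * a' + s * c * a * b\<^sup>2 + s\<^sup>2 * b * b') / S))
      / (S * S) = \<alpha> * q * S + p * s * c * b\<^sup>2 / S"
    and "x > 0" "S > 0" "s > 0" "b \<noteq> 0"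
  shows "\<alpha> * s * b * S\<^sup>2 = x * (s * b * a' - s * s * c * b ^ 3 - 2 * a * a * b * c - s * a * b')"
proof -
  have "S * p * x * (((\<alpha> * a * a + x * a') * S\<^sup>2 - x * a * (a * a' + s * c * a * b\<^sup>2 + s\<^sup>2 * b * b'))
      - (\<alpha> * S\<^sup>2 * S\<^sup>2 + x * s * c * b\<^sup>2 * S\<^sup>2)) = 0"
    using eq assms(1,2,5,6) by (simp add: field_simps power2_eq_square)
  then have "(\<alpha> * a * a + x * a') * S\<^sup>2 - x * a * (a * a' + s * c * a * b\<^sup>2 + s\<^sup>2 * b * b')
      = \<alpha> * S\<^sup>2 * S\<^sup>2 + x * s * c * b\<^sup>2 * S\<^sup>2"
    using assms(2,5,6) by simp
  then have "s * b * (\<alpha> * s * b * S\<^sup>2 - x * (s * b * a' - s * s * c * b ^ 3 - 2 * a * a * b * c - s * a * b')) = 0"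
    using assms(3) by algebra
  then show ?thesis using assms(7,8) by simp
qed

lemma first_euler_lagrange_curvature_form:
  assumes "alpha_stationary \<alpha> u v I" "regular_curve u v I" "open I" "t \<in> I" "deriv v t \<noteq> 0"
  shows "\<alpha> * sin (u t) * deriv v t * (speed u v t)\<^sup>2 = u t * curvature_numerator u v t"
proof -
  note derivs = regular_curve_has_derivatives[OF assms(2,4)]
  have "u t > 0" using assms(2,4) by (simp add: regular_curve_def)
  have "speed u v t > 0" by (rule regular_curve_speed_pos[OF assms(2,4)])
  have "sin (u t) > 0" by (rule regular_curve_sin_pos[OF assms(2-4)])
  have "((\<lambda>s. u s powr \<alpha> * deriv u s) has_real_derivative
      \<alpha> * u t powr (\<alpha> - 1) * deriv u t * deriv u t + u t powr \<alpha> * deriv (deriv u) t) (at t)"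
    by (rule DERIV_cong[OF DERIV_mult[OF DERIV_fun_powr[OF derivs(1) \<open>u t > 0\<close>] derivs(3)]]) simp
  from DERIV_divide[OF this speed_has_real_derivative[OF assms(2,4)]]
  have "((\<lambda>s. u s powr \<alpha> * deriv u s / speed u v s) has_real_derivative
      ((\<alpha> * u t powr (\<alpha> - 1) * deriv u t * deriv u t + u t powr \<alpha> * deriv (deriv u) t) * speed u v t
       - u t powr \<alpha> * deriv u t * ((deriv u t * deriv (deriv u) t
         + sin (u t) * cos (u t) * deriv u t * (deriv v t)\<^sup>2
         + (sin (u t))\<^sup>2 * deriv v t * deriv (deriv v) t) / speed u v t))
      / (speed u v t * speed u v t)) (at t)"
    using \<open>speed u v t > 0\<close> by simp
  moreover have "((\<lambda>s. u s powr \<alpha> * deriv u s / speed u v s) has_real_derivative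
      \<alpha> * u t powr (\<alpha> - 1) * speed u v t
      + u t powr \<alpha> * sin (u t) * cos (u t) * (deriv v t)\<^sup>2 / speed u v t) (at t)"
    using assms(1,4) unfolding alpha_stationary_def by blast
  ultimately have euler_lagrange:
    "((\<alpha> * u t powr (\<alpha> - 1) * deriv u t * deriv u t + u t powr \<alpha> * deriv (deriv u) t) * speed u v t
       - u t powr \<alpha> * deriv u t * ((deriv u t * deriv (deriv u) t
         + sin (u t) * cos (u t) * deriv u t * (deriv v t)\<^sup>2
         + (sin (u t))\<^sup>2 * deriv v t * deriv (deriv v) t) / speed u v t))
      / (speed u v t * speed u v t)
     = \<alpha> * u t powr (\<alpha> - 1) * speed u v t
      + u t powr \<alpha> * sin (u t) * cos (u t) * (deriv v t)\<^sup>2 / speed u v t"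
    by (rule DERIV_unique)
  have "u t powr (\<alpha> - 1) = u t powr \<alpha> / u t"
    using \<open>u t > 0\<close> by (simp add: powr_diff)
  moreover have "u t powr \<alpha> > 0" using \<open>u t > 0\<close> by simp
  moreover have "(speed u v t)\<^sup>2 = (deriv u t)\<^sup>2 + (sin (u t))\<^sup>2 * (deriv v t)\<^sup>2"
    by (simp add: speed_def)
  ultimately show ?thesis
    using euler_lagrange \<open>u t > 0\<close> \<open>speed u v t > 0\<close> \<open>sin (u t) > 0\<close> assms(5)
    unfolding curvature_numerator_def Let_def by (rule euler_lagrange_algebra)
qed

text \<open>Noether's first integral for the rotations about \<open>N\<close>.\<close>

definition angular_momentum :: "real \<Rightarrow> (real \<Rightarrow> real) \<Rightarrow> (real \<Rightarrow> real) \<Rightarrow> real \<Rightarrow> real" where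
  "angular_momentum \<alpha> u v s = u s powr \<alpha> * (sin (u s))\<^sup>2 * deriv v s / speed u v s"

lemma alpha_stationary_angular_momentum_constant:
  assumes "alpha_stationary \<alpha> u v I" "convex I"
  obtains C where "\<And>t. t \<in> I \<Longrightarrow> angular_momentum \<alpha> u v t = C"
proof -
  have "\<exists>C. \<forall>t\<in>I. angular_momentum \<alpha> u v t = C"
    using assms unfolding alpha_stationary_def angular_momentum_def[abs_def]
    by (intro has_field_derivative_zero_constant) (auto intro: has_field_derivative_at_within)
  then show ?thesis using that by blast
qed

lemma angular_momentum_eq_0_iff:
  assumes "regular_curve u v I" "open I" "t \<in> I"
  shows "angular_momentum \<alpha> u v t = 0 \<longleftrightarrow> deriv v t = 0"
  using assms regular_curve_sin_pos[OF assms] regular_curve_speed_pos[OF assms(1,3)]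
  by (auto simp: angular_momentum_def regular_curve_def)

lemma alpha_stationary_curvature_identity:
  assumes "alpha_stationary \<alpha> u v I" "regular_curve u v I" "open I" "t \<in> I" "deriv v t \<noteq> 0"
  shows "u t powr (\<alpha> + 1) * sin (u t) * curvature (curve u v) t = \<alpha> * angular_momentum \<alpha> u v t"
proof -
  have "u t > 0" using assms(2,4) by (simp add: regular_curve_def)
  have "speed u v t > 0" by (rule regular_curve_speed_pos[OF assms(2,4)])
  have "u t powr (\<alpha> + 1) * sin (u t) * curvature (curve u v) t
      = u t powr \<alpha> * sin (u t) * (u t * curvature_numerator u v t) / speed u v t ^ 3"
    using \<open>u t > 0\<close> by (simp add: curvature_curve[OF assms(2-4)] powr_add)
  also have "\<dots> = u t powr \<alpha> * sin (u t) * (\<alpha> * sin (u t) * deriv v t * (speed u v t)\<^sup>2) / speed u v t ^ 3"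
    by (simp add: first_euler_lagrange_curvature_form[OF assms])
  also have "\<dots> = \<alpha> * angular_momentum \<alpha> u v t"
    using \<open>speed u v t > 0\<close> by (simp add: angular_momentum_def power2_eq_square power3_eq_cube)
  finally show ?thesis .
qed

lemma alpha_stationary_parallel_imp_cot:
  assumes "alpha_stationary \<alpha> u v I" "regular_curve u v I" "open I" "t \<in> I"
    and "\<And>s. s \<in> I \<Longrightarrow> u s = r"
  shows "\<alpha> = - r * cot r"
proof -
  have "\<forall>s\<in>I. u s = r" using assms(5) by blast
  note parallel = regular_curve_on_parallel[OF assms(2,3) this]
  have u''_0: "deriv (deriv u) t = 0"
    using derivative_eq_0_if_locally_constant[OF regular_curve_has_derivatives(3)[OF assms(2,4)]
        assms(3,4) parallel(1)] .
  have "\<alpha> * sin r * deriv v t * ((sin r)\<^sup>2 * (deriv v t)\<^sup>2) = r * (- sin r * sin r * cos r * deriv v t ^ 3)"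
    using first_euler_lagrange_curvature_form[OF assms(1-4) parallel(4)[OF assms(4)]]
    unfolding curvature_numerator_def Let_def parallel(1,3)[OF assms(4)] u''_0 assms(5)[OF assms(4)]
    by (simp add: power_mult_distrib)
  then have "(sin r)\<^sup>2 * (deriv v t)^3 * (\<alpha> * sin r + r * cos r) = 0"
    by (simp add: algebra_simps power2_eq_square power3_eq_cube)
  then have "\<alpha> * sin r + r * cos r = 0" using parallel(2,4)[OF assms(4)] by simp
  then show ?thesis using parallel(2)[OF assms(4)] by (simp add: cot_def field_simps)
qed

lemma alpha_stationary_constant_curvature_cases:
  assumes "\<alpha> \<noteq> 0" "alpha_stationary \<alpha> u v I" "regular_curve u v I"
    "constant_curvature (curve u v) I" "open I" "convex I" "t\<^sub>0 \<in> I"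
  shows "(\<forall>t\<in>I. deriv v t = 0) \<or> (\<exists>r. 0 < r \<and> r < pi \<and> (\<forall>t\<in>I. u t = r) \<and> \<alpha> = - r * cot r)"
proof -
  obtain C where C: "\<And>t. t \<in> I \<Longrightarrow> angular_momentum \<alpha> u v t = C"
    using alpha_stationary_angular_momentum_constant[OF assms(2,6)] by blast
  obtain c where c: "\<And>t. t \<in> I \<Longrightarrow> curvature (curve u v) t = c"
    using assms(4) unfolding constant_curvature_def by blast
  show ?thesis
  proof (cases "C = 0")
    case True
    then show ?thesis using C angular_momentum_eq_0_iff[OF assms(3,5)] by auto
  next
    case False
    then have v'_nonzero: "deriv v t \<noteq> 0" if "t \<in> I" for t
      using C angular_momentum_eq_0_iff[OF assms(3,5) that] that by auto
    have profile: "u t powr (\<alpha> + 1) * sin (u t) * c = \<alpha> * C" if "t \<in> I" for t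
      using alpha_stationary_curvature_identity[OF assms(2,3,5) that v'_nonzero[OF that]] that c C by simp
    then have "c \<noteq> 0" using assms(1,7) False by force
    then have "u t powr (\<alpha> + 1) * sin (u t) = \<alpha> * C / c" if "t \<in> I" for t
      using profile[OF that] by (simp add: field_simps)
    moreover note regular_curve_continuous_on(1)[OF assms(3)]
    moreover have "0 < u t \<and> u t \<le> pi" if "t \<in> I" for t
      using assms(3) that by (simp add: regular_curve_def)
    ultimately have "u t = u t\<^sub>0" if "t \<in> I" for t
      using constant_if_powr_mult_sin_constant[OF convex_connected[OF assms(6)]] that assms(7)
      by blast
    moreover have "0 < u t\<^sub>0" "u t\<^sub>0 < pi"
      using assms(3,7) regular_curve_u_less_pi[OF assms(3,5,7)] by (simp_all add: regular_curve_def)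
    ultimately show ?thesis
      using alpha_stationary_parallel_imp_cot[OF assms(2,3,5,7)] by blast
  qed
qed

lemma alpha_stationary_on_meridian:
  assumes "regular_curve u v I" "open I" "connected I" "\<And>t. t \<in> I \<Longrightarrow> deriv v t = 0"
  shows "alpha_stationary \<alpha> u v I"
  unfolding alpha_stationary_def
proof (intro ballI conjI)
  fix t assume "t \<in> I"
  note derivs = regular_curve_has_derivatives[OF assms(1)]
  have speed_abs: "speed u v s = \<bar>deriv u s\<bar>" if "s \<in> I" for s
    using assms(4)[OF that] by (simp add: speed_def)
  have u'_nonzero: "deriv u s \<noteq> 0" if "s \<in> I" for s
    using regular_curve_speed_pos[OF assms(1) that] speed_abs[OF that] by auto
  have "0 \<notin> deriv u ` I" using u'_nonzero by auto
  then have same_sign: "sgn (deriv u s) = sgn (deriv u t)" if "s \<in> I" for s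
    using sgn_eq_if_continuous_nonvanishing[OF assms(3) regular_curve_continuous_on(2)[OF assms(1)]]
      that \<open>t \<in> I\<close> by blast
  have "u s powr \<alpha> * deriv u s / speed u v s = sgn (deriv u t) * u s powr \<alpha>" if "s \<in> I" for s
  proof -
    have "u s powr \<alpha> * deriv u s / speed u v s = sgn (deriv u s) * u s powr \<alpha>"
      using u'_nonzero[OF that] by (cases "deriv u s > 0") (auto simp: speed_abs[OF that])
    then show ?thesis using same_sign[OF that] by simp
  qed
  moreover have "((\<lambda>s. sgn (deriv u t) * u s powr \<alpha>) has_real_derivative
      sgn (deriv u t) * (\<alpha> * u t powr (\<alpha> - 1) * deriv u t)) (at t)"
    using assms(1) \<open>t \<in> I\<close> unfolding regular_curve_def
    by (intro DERIV_cmult DERIV_cong[OF DERIV_fun_powr[OF derivs(1)[OF \<open>t \<in> I\<close>]]]) simp_all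
  ultimately have "((\<lambda>s. u s powr \<alpha> * deriv u s / speed u v s) has_real_derivative
      sgn (deriv u t) * (\<alpha> * u t powr (\<alpha> - 1) * deriv u t)) (at t)"
    using has_field_derivative_transform_within_open[OF _ assms(2) \<open>t \<in> I\<close>] by simp
  then show "((\<lambda>s. u s powr \<alpha> * deriv u s / speed u v s) has_real_derivative
      \<alpha> * u t powr (\<alpha> - 1) * speed u v t
      + u t powr \<alpha> * sin (u t) * cos (u t) * (deriv v t)\<^sup>2 / speed u v t) (at t)"
    using assms(4)[OF \<open>t \<in> I\<close>] speed_abs[OF \<open>t \<in> I\<close>] by (simp add: abs_sgn algebra_simps)
  show "((\<lambda>s. u s powr \<alpha> * (sin (u s))\<^sup>2 * deriv v s / speed u v s) has_real_derivative 0) (at t)"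
    using assms(2,4) \<open>t \<in> I\<close> by (intro has_field_derivative_transform_within_open[OF DERIV_const]) auto
qed

lemma alpha_stationary_on_parallel:
  assumes "regular_curve u v I" "open I" "connected I" "\<And>t. t \<in> I \<Longrightarrow> u t = r"
    and "\<alpha> = - r * cot r"
  shows "alpha_stationary \<alpha> u v I"
  unfolding alpha_stationary_def
proof (intro ballI conjI)
  fix t assume "t \<in> I"
  have "\<forall>s\<in>I. u s = r" using assms(4) by blast
  note parallel = regular_curve_on_parallel[OF assms(1,2) this]
  have "r > 0" using assms(1,4) \<open>t \<in> I\<close> by (force simp: regular_curve_def)
  have "sin r > 0" by (rule parallel(2)[OF \<open>t \<in> I\<close>])
  have "\<alpha> * sin r + r * cos r = 0"
    using assms(5) \<open>sin r > 0\<close> by (simp add: cot_def field_simps)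
  moreover have "\<alpha> * r powr (\<alpha> - 1) * speed u v t + r powr \<alpha> * sin r * cos r * (deriv v t)\<^sup>2 / speed u v t
      = r powr (\<alpha> - 1) * \<bar>deriv v t\<bar> * (\<alpha> * sin r + r * cos r)"
  proof -
    have "r powr \<alpha> = r powr (\<alpha> - 1) * r" using \<open>r > 0\<close> by (simp add: powr_diff)
    moreover have "(deriv v t)\<^sup>2 = \<bar>deriv v t\<bar> * \<bar>deriv v t\<bar>" by (simp add: power2_eq_square)
    ultimately show ?thesis
      using \<open>sin r > 0\<close> parallel(4)[OF \<open>t \<in> I\<close>] by (simp add: parallel(3)[OF \<open>t \<in> I\<close>] field_simps)
  qed
  moreover have "((\<lambda>s. u s powr \<alpha> * deriv u s / speed u v s) has_real_derivative 0) (at t)"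
    using assms(2) \<open>t \<in> I\<close> parallel(1)
    by (intro has_field_derivative_transform_within_open[OF DERIV_const]) auto
  ultimately show "((\<lambda>s. u s powr \<alpha> * deriv u s / speed u v s) has_real_derivative
      \<alpha> * u t powr (\<alpha> - 1) * speed u v t
      + u t powr \<alpha> * sin (u t) * cos (u t) * (deriv v t)\<^sup>2 / speed u v t) (at t)"
    using assms(4)[OF \<open>t \<in> I\<close>] by simp
  have "0 \<notin> deriv v ` I" using parallel(4) by auto
  then have same_sign: "sgn (deriv v s) = sgn (deriv v t)" if "s \<in> I" for s
    using sgn_eq_if_continuous_nonvanishing[OF assms(3) regular_curve_continuous_on(3)[OF assms(1)]]
      that \<open>t \<in> I\<close> by blast
  have "u s powr \<alpha> * (sin (u s))\<^sup>2 * deriv v s / speed u v s = r powr \<alpha> * sin r * sgn (deriv v t)"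
    if "s \<in> I" for s
    using parallel(4)[OF that] \<open>sin r > 0\<close> same_sign[OF that, symmetric]
    by (cases "deriv v s > 0") (auto simp: parallel(3)[OF that] assms(4)[OF that] power2_eq_square)
  then show "((\<lambda>s. u s powr \<alpha> * (sin (u s))\<^sup>2 * deriv v s / speed u v s) has_real_derivative 0) (at t)"
    using assms(2) \<open>t \<in> I\<close> by (intro has_field_derivative_transform_within_open[OF DERIV_const]) auto
qed

section \<open>Meridians and parallels\<close>

lemma curve_subset_circle_N_iff:
  assumes "regular_curve u v I" "0 \<le> r" "r \<le> pi"
  shows "curve u v ` I \<subseteq> circle_N r \<longleftrightarrow> (\<forall>t\<in>I. u t = r)"
proof
  assume "curve u v ` I \<subseteq> circle_N r"
  show "\<forall>t\<in>I. u t = r"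
  proof
    fix t assume "t \<in> I"
    then obtain z where "curve u v t = Psi r z"
      using \<open>curve u v ` I \<subseteq> circle_N r\<close> unfolding circle_N_def by blast
    have "cos (u t) = curve u v t $ 3" by (simp add: curve_def Psi_def)
    also have "\<dots> = cos r" by (simp add: \<open>curve u v t = Psi r z\<close> Psi_def)
    finally have "cos (u t) = cos r" .
    moreover have "0 \<le> u t" "u t \<le> pi" using assms(1) \<open>t \<in> I\<close> by (auto simp: regular_curve_def)
    ultimately show "u t = r" using assms(2,3) cos_inj_pi by blast
  qed
next
  assume "\<forall>t\<in>I. u t = r"
  then have "curve u v t = Psi r (v t)" if "t \<in> I" for t
    using that by (simp add: curve_def)
  then show "curve u v ` I \<subseteq> circle_N r" unfolding circle_N_def by blast
qed

lemma NP_eq_Psi: "NP = Psi 0 c"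
  by (simp add: NP_def Psi_def)

lemma meridian_normal_nonzero: "(vector [- sin c, cos c, 0] :: real^3) \<noteq> 0"
proof
  assume "(vector [- sin c, cos c, 0] :: real^3) = 0"
  then have "sin c = 0" "cos c = 0" by (simp_all add: vec_eq_iff forall_3)
  then show False using sin_cos_squared_add[of c] by simp
qed

lemma Psi_in_meridian_great_circle: "Psi x c \<in> great_circle (vector [- sin c, cos c, 0])"
proof -
  have "Psi x c \<bullet> vector [- sin c, cos c, 0] = 0"
    by (simp add: Psi_def inner_vec_def sum_3 algebra_simps)
  then show ?thesis by (simp add: great_circle_def)
qed

lemma deriv_v_eq_0_if_in_great_circle_through_NP:
  assumes "regular_curve u v I" "open I" "w \<noteq> 0" "NP \<in> great_circle w"
    "curve u v ` I \<subseteq> great_circle w" "t \<in> I"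
  shows "deriv v t = 0"
proof -
  have "w $ 3 = 0" using assms(4) by (simp add: great_circle_def NP_def inner_vec_def sum_3)
  then have "(w $ 1)\<^sup>2 + (w $ 2)\<^sup>2 > 0"
    using assms(3) by (auto simp: vec_eq_iff forall_3 add_pos_nonneg add_nonneg_pos)
  define F where "F = (\<lambda>t. cos (v t) * w $ 1 + sin (v t) * w $ 2)"
  have F_0: "F s = 0" if "s \<in> I" for s
  proof -
    have "curve u v s \<bullet> w = 0" using assms(5) that by (auto simp: great_circle_def)
    then have "sin (u s) * F s = 0"
      by (simp add: curve_def Psi_def inner_vec_def sum_3 \<open>w $ 3 = 0\<close> F_def algebra_simps)
    then show ?thesis using regular_curve_sin_pos[OF assms(1,2) that] by simp
  qed
  define G where "G = - sin (v t) * w $ 1 + cos (v t) * w $ 2"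
  have "(F t)\<^sup>2 + G\<^sup>2 = (w $ 1)\<^sup>2 + (w $ 2)\<^sup>2"
    unfolding F_def G_def using sin_cos_squared_add[of "v t"] by algebra
  then have "G \<noteq> 0"
    using F_0[OF assms(6)] \<open>(w $ 1)\<^sup>2 + (w $ 2)\<^sup>2 > 0\<close> by auto
  have "(F has_real_derivative G * deriv v t) (at t)"
    unfolding F_def G_def
    by (rule derivative_eq_intros regular_curve_has_derivatives(2)[OF assms(1,6)] refl)+
      (simp add: algebra_simps)
  then have "G * deriv v t = 0"
    using derivative_eq_0_if_locally_constant[of F, OF _ assms(2,6) F_0] by blast
  then show "deriv v t = 0" using \<open>G \<noteq> 0\<close> by simp
qed

lemma curve_subset_meridian_iff:
  assumes "regular_curve u v I" "open I" "convex I"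
  shows "(\<exists>w. w \<noteq> 0 \<and> NP \<in> great_circle w \<and> curve u v ` I \<subseteq> great_circle w)
    \<longleftrightarrow> (\<forall>t\<in>I. deriv v t = 0)"
proof
  assume "\<exists>w. w \<noteq> 0 \<and> NP \<in> great_circle w \<and> curve u v ` I \<subseteq> great_circle w"
  then show "\<forall>t\<in>I. deriv v t = 0"
    using deriv_v_eq_0_if_in_great_circle_through_NP[OF assms(1,2)] by blast
next
  assume "\<forall>t\<in>I. deriv v t = 0"
  then obtain c where c: "\<And>t. t \<in> I \<Longrightarrow> v t = c"
    using has_field_derivative_zero_constant[OF assms(3), of v]
      regular_curve_has_derivatives(2)[OF assms(1)]
    by (metis has_field_derivative_at_within)
  then have "curve u v ` I \<subseteq> great_circle (vector [- sin c, cos c, 0])"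
    using Psi_in_meridian_great_circle by (auto simp: curve_def)
  moreover have "NP \<in> great_circle (vector [- sin c, cos c, 0])"
    using Psi_in_meridian_great_circle[of 0 c] by (simp only: NP_eq_Psi[of c])
  ultimately show "\<exists>w. w \<noteq> 0 \<and> NP \<in> great_circle w \<and> curve u v ` I \<subseteq> great_circle w"
    using meridian_normal_nonzero by blast
qed

theorem proposition3p3:
  fixes \<alpha> a b :: real and u v :: "real \<Rightarrow> real"
  assumes "\<alpha> \<noteq> 0" and "a < b"
    and "regular_curve u v {a<..<b}"
    and "constant_curvature (curve u v) {a<..<b}"
  shows "alpha_stationary \<alpha> u v {a<..<b} \<longleftrightarrow>
    ((\<exists>w. w \<noteq> 0 \<and> NP \<in> great_circle w \<and> curve u v ` {a<..<b} \<subseteq> great_circle w)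
     \<or> (\<exists>r. 0 < r \<and> r < pi \<and> curve u v ` {a<..<b} \<subseteq> circle_N r \<and> \<alpha> = - r * cot r))"
proof -
  let ?I = "{a<..<b}"
  have I: "open ?I" "convex ?I" "connected ?I" "(a + b) / 2 \<in> ?I"
    using assms(2) by simp_all
  have circle_iff: "curve u v ` ?I \<subseteq> circle_N r \<longleftrightarrow> (\<forall>t\<in>?I. u t = r)" if "0 < r" "r < pi" for r
    using curve_subset_circle_N_iff[OF assms(3)] that by simp
  show ?thesis
    unfolding curve_subset_meridian_iff[OF assms(3) I(1,2)]
  proof
    assume "alpha_stationary \<alpha> u v ?I"
    then show "(\<forall>t\<in>?I. deriv v t = 0)
      \<or> (\<exists>r. 0 < r \<and> r < pi \<and> curve u v ` ?I \<subseteq> circle_N r \<and> \<alpha> = - r * cot r)"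
      using alpha_stationary_constant_curvature_cases[OF assms(1) _ assms(3,4) I(1,2,4)] circle_iff
      by blast
  next
    assume "(\<forall>t\<in>?I. deriv v t = 0)
      \<or> (\<exists>r. 0 < r \<and> r < pi \<and> curve u v ` ?I \<subseteq> circle_N r \<and> \<alpha> = - r * cot r)"
    then show "alpha_stationary \<alpha> u v ?I"
      using alpha_stationary_on_meridian[OF assms(3) I(1,3)]
        alpha_stationary_on_parallel[OF assms(3) I(1,3)] circle_iff
      by blast
  qed
qed

end
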